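(* For every constant $k>0$ there is a constant $K$ such that the following holds for all even $n$. Let $a$ be even with $0\le a<n/2$, and let $y\in\{0,1\}^n$ with $\min\{|y|_1,n-|y|_1\}=a$. Let $N\ge N_a:=K a^{5/2}n^2/(n-2a)^{3/2}$. Independently $N$ times, sample an offspring of $y$ by flipping exactly $n/2$ positions chosen uniformly at random (without repetition), and let $Y$ be the number of offspring $z$ with $|z|_1=n/2$. Then, if $a\ge 2$, $$\Pr\big(Y\ge N(p_a+p_{a-2})/2\big)\le\exp\!\big(-k(n-2a)^{1/2}\big),$$ and if $a\le n/2-2$, $$\Pr\big(Y\le N(p_a+p_{a+2})/2\big)\le\exp\!\big(-k(n-2a)^{1/2}\big).$$
   Context: For $x\in\{0,1\}^n$, $|x|_1=\sum_ix_i$. For even $b$ with $0\le b\le n/2$, $p_b:=\binom{n-b}{(n-b)/2}\binom{b}{b/2}\big/\binom{n}{n/2}$; this is the probability that flipping exactly $n/2$ uniformly random positions of a string $x$ with $\min\{|x|_1,n-|x|_1\}=b$ yields a string with exactly $n/2$ ones. *)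

theory Defs
  imports "HOL-Probability.Probability"
begin

text \<open>Bit strings of length n are represented as bool lists of length n (True = 1).\<close>

definition ones :: "bool list \<Rightarrow> nat" where
  "ones x = length (filter id x)"

definition pb :: "nat \<Rightarrow> nat \<Rightarrow> real" where
  "pb n b = real ((n - b) choose ((n - b) div 2)) * real (b choose (b div 2))
            / real (n choose (n div 2))"

definition flip_set :: "bool list \<Rightarrow> nat set \<Rightarrow> bool list" where
  "flip_set y S = map (\<lambda>i. if i \<in> S then \<not> (y ! i) else y ! i) [0..<length y]"

definition offspring :: "bool list \<Rightarrow> bool list pmf" where
  "offspring y = map_pmf (flip_set y)
     (pmf_of_set {S. S \<subseteq> {..<length y} \<and> card S = length y div 2})"

definition samples :: "nat \<Rightarrow> bool list \<Rightarrow> (nat \<Rightarrow> bool list) pmf" where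
  "samples N y = Pi_pmf {..<N} [] (\<lambda>_. offspring y)"

definition countY :: "nat \<Rightarrow> nat \<Rightarrow> (nat \<Rightarrow> bool list) \<Rightarrow> nat" where
  "countY n N f = card {i \<in> {..<N}. ones (f i) = n div 2}"

end

theory Submission
  imports Defs
begin

(*
  An offspring of y has n/2 ones exactly when the n/2 flipped positions contain half of the
  one-positions and half of the zero-positions of y.  Hence one offspring succeeds with
  probability p_a, and the number Y of successful offspring among N independent ones is
  Binomial(N, p_a).
  Writing p_b through central binomial coefficients c_m = (2m choose m), the growth
  c_{m+1} <= 4 c_m and the bound 4 m c_m^2 >= 16^m give p_b >= 1/sqrt(2b), and the
  recurrence (m+1) c_{m+1} = 2(2m+1) c_m gives a two-term relation between p_b and p_{b-2},
  from which the relative gaps p_{a-2} - p_a >= p_{a-2} (n-2a)/(an) and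
  p_a - p_{a+2} >= p_a (n-2a)/(4an) follow.
  Multiplicative Chernoff bounds exp(-N d^2/(4p)) for deviations N d of a Binomial(N, p)
  variable are derived from its moment generating function.  Taking d = half the gap and
  K = 512 k, the lower bound on p_a makes the Chernoff exponent at least k sqrt(n - 2a).
  The lower tail for a = 0 is degenerate: p_0 = 1, so Y = N almost surely.
*)

lemma ones_card: "ones y = card {i. i < length y \<and> y ! i}"
  unfolding ones_def by (simp add: length_filter_conv_card)

lemma ones_flip_set:
  assumes S: "S \<subseteq> {..<length y}"
  defines "Ob \<equiv> {i. i < length y \<and> y ! i}"
  shows "ones (flip_set y S) + card (S \<inter> Ob) = ones y + card (S - Ob)"
proof -
  have fin: "finite Ob" "finite S" using S finite_subset unfolding Ob_def by auto
  have "ones (flip_set y S) = card {i. i < length y \<and> (if i \<in> S then \<not> y ! i else y ! i)}"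
    unfolding ones_card flip_set_def by (intro arg_cong[where f=card]) auto
  also have "{i. i < length y \<and> (if i \<in> S then \<not> y ! i else y ! i)} = (Ob - S) \<union> (S - Ob)"
    using S unfolding Ob_def by auto
  also have "card \<dots> = card (Ob - S) + card (S - Ob)"
    using fin by (intro card_Un_disjoint) auto
  finally have "ones (flip_set y S) = card (Ob - S) + card (S - Ob)" .
  moreover have "ones y = card (Ob \<inter> S) + card (Ob - S)"
    unfolding ones_card Ob_def[symmetric] by (rule card_Int_Diff[OF fin(1)])
  ultimately show ?thesis by (simp add: Int_commute)
qed

lemma card_split_subsets:
  assumes fin: "finite Ob" "finite Zb" and dis: "Ob \<inter> Zb = {}"
  shows "card {S. S \<subseteq> Ob \<union> Zb \<and> card (S \<inter> Ob) = j \<and> card (S \<inter> Zb) = l}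
         = (card Ob choose j) * (card Zb choose l)"
proof -
  have "bij_betw (\<lambda>S. (S \<inter> Ob, S \<inter> Zb))
          {S. S \<subseteq> Ob \<union> Zb \<and> card (S \<inter> Ob) = j \<and> card (S \<inter> Zb) = l}
          ({A. A \<subseteq> Ob \<and> card A = j} \<times> {B. B \<subseteq> Zb \<and> card B = l})"
  proof (rule bij_betw_byWitness[where f' = "\<lambda>(A, B). A \<union> B"])
    show "(\<lambda>(A, B). A \<union> B) ` ({A. A \<subseteq> Ob \<and> card A = j} \<times> {B. B \<subseteq> Zb \<and> card B = l})
       \<subseteq> {S. S \<subseteq> Ob \<union> Zb \<and> card (S \<inter> Ob) = j \<and> card (S \<inter> Zb) = l}"
    proof safe
      fix A B assume "A \<subseteq> Ob" "B \<subseteq> Zb"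
      then have "(A \<union> B) \<inter> Ob = A" "(A \<union> B) \<inter> Zb = B" using dis by auto
      then show "card ((A \<union> B) \<inter> Ob) = card A" "card ((A \<union> B) \<inter> Zb) = card B" by auto
    qed auto
  qed (use dis in auto)
  then have "card {S. S \<subseteq> Ob \<union> Zb \<and> card (S \<inter> Ob) = j \<and> card (S \<inter> Zb) = l}
     = card ({A. A \<subseteq> Ob \<and> card A = j} \<times> {B. B \<subseteq> Zb \<and> card B = l})"
    by (rule bij_betw_same_card)
  also have "\<dots> = (card Ob choose j) * (card Zb choose l)"
    by (simp add: card_cartesian_product n_subsets fin)
  finally show ?thesis .
qed

lemma pb_symmetric: "b \<le> n \<Longrightarrow> pb n (n - b) = pb n b"
  unfolding pb_def by (simp add: mult.commute)

lemma successful_flip_sets: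
  assumes len: "length y = n" and evn: "even n" and evm: "even (ones y)"
  defines "Ob \<equiv> {i. i < n \<and> y ! i}"
  defines "Zb \<equiv> {..<n} - Ob"
  shows "{S. S \<subseteq> {..<n} \<and> card S = n div 2} \<inter> {S. ones (flip_set y S) = n div 2}
       = {S. S \<subseteq> Ob \<union> Zb \<and> card (S \<inter> Ob) = ones y div 2
               \<and> card (S \<inter> Zb) = (n - ones y) div 2}"
proof (intro set_eqI)
  fix S
  define h m where "h = n div 2" and "m = ones y"
  have ObZb: "Ob \<union> Zb = {..<n}" unfolding Zb_def Ob_def by auto
  have m_eq: "m = card Ob" unfolding m_def Ob_def ones_card len ..
  have mn: "m \<le> n" unfolding m_eq Ob_def by (rule card_mono[of "{..<n}", simplified]) auto
  obtain mm where mm: "m = 2 * mm" using evm unfolding m_def by blast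
  have halves: "m div 2 = mm" "(n - m) div 2 = h - mm" "mm \<le> h"
    using mm evn mn unfolding h_def by auto
  show "S \<in> {S. S \<subseteq> {..<n} \<and> card S = n div 2} \<inter> {S. ones (flip_set y S) = n div 2} \<longleftrightarrow>
        S \<in> {S. S \<subseteq> Ob \<union> Zb \<and> card (S \<inter> Ob) = ones y div 2
                 \<and> card (S \<inter> Zb) = (n - ones y) div 2}"
  proof (cases "S \<subseteq> {..<n}")
    case False
    then show ?thesis unfolding ObZb by auto
  next
    case True
    have SZb: "S - Ob = S \<inter> Zb" using True unfolding Zb_def by auto
    have flip: "ones (flip_set y S) + card (S \<inter> Ob) = m + card (S \<inter> Zb)"
      using ones_flip_set[of S y] True len SZb unfolding m_def Ob_def by simp
    have split: "card S = card (S \<inter> Ob) + card (S \<inter> Zb)"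
      using card_Int_Diff[of S Ob] True finite_subset SZb by auto
    have "(card S = h \<and> ones (flip_set y S) = h) \<longleftrightarrow>
          (card (S \<inter> Ob) = m div 2 \<and> card (S \<inter> Zb) = (n - m) div 2)"
      unfolding halves using flip split halves(3) unfolding mm by linarith
    then show ?thesis using True unfolding ObZb h_def m_def by auto
  qed
qed

lemma offspring_success_prob:
  assumes len: "length y = n" and evn: "even n" and evm: "even (ones y)"
  shows "pmf (map_pmf (\<lambda>z. ones z = n div 2) (offspring y)) True = pb n (ones y)"
proof -
  define Ob Zb where "Ob = {i. i < n \<and> y ! i}" and "Zb = {..<n} - Ob"
  define U where "U = {S. S \<subseteq> {..<n} \<and> card S = n div 2}"
  have fin: "finite Ob" "finite Zb" "finite U"
    unfolding Ob_def Zb_def U_def by (auto intro: finite_subset[of _ "Pow {..<n}"])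
  have dis: "Ob \<inter> Zb = {}" unfolding Zb_def by auto
  have cOb: "card Ob = ones y" unfolding Ob_def ones_card len ..
  have cZb: "card Zb = n - ones y"
    unfolding Zb_def cOb[symmetric] using card_Diff_subset[of Ob "{..<n}"] by (auto simp: Ob_def)
  have cU: "card U = n choose (n div 2)" unfolding U_def using n_subsets[of "{..<n}" "n div 2"] by simp
  have "pmf (map_pmf (\<lambda>z. ones z = n div 2) (offspring y)) True
      = measure_pmf.prob (pmf_of_set U) {S. ones (flip_set y S) = n div 2}"
    unfolding offspring_def len U_def by (simp add: pmf_map vimage_def)
  also have "\<dots> = real (card (U \<inter> {S. ones (flip_set y S) = n div 2})) / real (card U)"
    using fin cU by (subst measure_pmf_of_set) auto
  also have "card (U \<inter> {S. ones (flip_set y S) = n div 2})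
      = (ones y choose (ones y div 2)) * ((n - ones y) choose ((n - ones y) div 2))"
    unfolding U_def successful_flip_sets[OF assms] Ob_def[symmetric] Zb_def[symmetric]
    using card_split_subsets[OF fin(1,2) dis] cOb cZb by simp
  finally show ?thesis unfolding cU pb_def by (simp add: mult.commute)
qed

lemma bool_pmf_eq_bernoulli:
  fixes q :: "bool pmf"
  assumes "pmf q True = p"
  shows "q = bernoulli_pmf p"
proof -
  have p: "0 \<le> p" "p \<le> 1" using assms pmf_nonneg[of q True] pmf_le_1[of q True] by auto
  show ?thesis
  proof (rule pmf_eqI)
    fix b :: bool
    show "pmf q b = pmf (bernoulli_pmf p) b"
      using p assms by (cases b) (auto simp: pmf_False_conv_True[of q])
  qed
qed

lemma countY_binomial:
  assumes "length y = n" "even n" "even (ones y)"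
  shows "map_pmf (countY n N) (samples N y) = binomial_pmf N (pb n (ones y))"
proof -
  let ?succ = "\<lambda>z. ones z = n div 2" and ?p = "pb n (ones y)"
  have pT: "pmf (map_pmf ?succ (offspring y)) True = ?p" by (rule offspring_success_prob[OF assms])
  have p: "0 \<le> ?p" "?p \<le> 1" using pT pmf_nonneg pmf_le_1 by metis+
  have "map_pmf ((\<circ>) ?succ) (samples N y) = Pi_pmf {..<N} (?succ []) (\<lambda>_. bernoulli_pmf ?p)"
    unfolding samples_def bool_pmf_eq_bernoulli[OF pT, symmetric]
    by (rule Pi_pmf_map[symmetric]) auto
  then have "map_pmf (\<lambda>f. card {i \<in> {..<N}. f i}) (map_pmf ((\<circ>) ?succ) (samples N y))
             = binomial_pmf N ?p"
    using binomial_pmf_altdef'[of "{..<N}" N ?p "?succ []"] p by simp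
  then show ?thesis unfolding map_pmf_comp countY_def by (simp add: o_def)
qed

lemma countY_distribution:
  assumes len: "length y = n" and evn: "even n" and eva: "even a"
    and mina: "min (ones y) (n - ones y) = a"
  shows "map_pmf (countY n N) (samples N y) = binomial_pmf N (pb n a)"
proof -
  have mn: "ones y \<le> n" unfolding ones_def using len by (metis length_filter_le)
  then have ma: "ones y = a \<or> ones y = n - a" using mina by linarith
  then have "even (ones y)" using evn eva mn by auto
  moreover have "pb n (ones y) = pb n a" using ma mn mina pb_symmetric[of a n] by auto
  ultimately show ?thesis using countY_binomial[OF len evn] by simp
qed

definition cb :: "nat \<Rightarrow> real" where "cb m = real ((2*m) choose m)"

lemma cb_pos: "cb m > 0"
  unfolding cb_def by simp

lemma cb_fact: "cb m = fact (2*m) / (fact m)^2"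
  unfolding cb_def by (subst binomial_fact) (auto simp: mult_2 power2_eq_square)

lemma cb_rec: "real (m+1) * cb (m+1) = 2*(2*real m+1) * cb m"
proof -
  have f1: "fact (2*(m+1)) = (2*real m+2) * (2*real m+1) * (fact (2*m) :: real)"
    by (simp add: algebra_simps)
  have f2: "fact (m+1) = (real m+1) * (fact m :: real)" by simp
  have "fact m \<noteq> (0::real)" by simp
  then show ?thesis unfolding cb_fact f1 f2
    by (simp add: divide_simps power2_eq_square) (simp add: algebra_simps)
qed

lemma cb_le_pow: "cb (m+j) \<le> 4^j * cb m"
proof (induction j)
  case (Suc j)
  have "real (m+j+1) * cb (m+j+1) = 2*(2*real (m+j)+1) * cb (m+j)" by (rule cb_rec)
  also have "\<dots> \<le> real (m+j+1) * (4 * cb (m+j))" using cb_pos[of "m+j"] by (simp add: algebra_simps)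
  finally have "cb (m + Suc j) \<le> 4 * cb (m+j)" by (subst (asm) mult_le_cancel_left_pos) auto
  also have "\<dots> \<le> 4 * (4^j * cb m)" using Suc by simp
  finally show ?case by simp
qed simp

lemma cb_lower: "m \<ge> 1 \<Longrightarrow> 4 * real m * (cb m)^2 \<ge> (4^m)^2"
proof (induction m rule: nat_induct_at_least)
  case base
  then show ?case by (simp add: cb_def)
next
  case (Suc m)
  have step: "(real m + 1)^2 * (cb (m+1))^2 = 4*(2*real m+1)^2 * (cb m)^2"
  proof -
    have "(real (m+1) * cb (m+1))^2 = (2*(2*real m+1) * cb m)^2" by (simp only: cb_rec)
    then show ?thesis by (simp only: power_mult_distrib) (simp add: add.commute)
  qed
  have "(16 * (4^m)^2) * (real m + 1) = 16 * (real m + 1) * (4^m)^2" by simp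
  also have "\<dots> \<le> 16 * (real m + 1) * (4 * real m * (cb m)^2)"
    using Suc.IH by (intro mult_left_mono) auto
  also have "\<dots> = (64 * (real m)^2 + 64 * real m) * (cb m)^2"
    by (simp add: algebra_simps power2_eq_square)
  also have "\<dots> \<le> (64 * (real m)^2 + 64 * real m + 16) * (cb m)^2"
    by (intro mult_right_mono) auto
  also have "\<dots> = (4 * (real m + 1) * (cb (m+1))^2) * (real m + 1)"
    using step by (simp add: algebra_simps power2_eq_square)
  finally have "16 * (4^m)^2 \<le> 4 * (real m + 1) * (cb (m+1))^2"
    by (rule mult_right_le_imp_le) simp
  then show ?case by (simp add: power_mult_distrib power2_eq_square algebra_simps)
qed

lemma pb_cb:
  assumes "even n" "even b" "b \<le> n"
  shows "pb n b = cb ((n-b) div 2) * cb (b div 2) / cb (n div 2)"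
proof -
  obtain h j where h: "n = 2*h" and j: "b = 2*j" using assms by (auto elim!: evenE)
  have "n - b = 2 * (h - j)" using h j by simp
  then show ?thesis unfolding pb_def cb_def using h j by simp
qed

lemma pb_zero: "even n \<Longrightarrow> pb n 0 = 1"
  using pb_cb[of n 0] cb_pos[of "n div 2"] by (simp add: cb_def)

lemma pb_nonneg: "pb n b \<ge> 0"
  unfolding pb_def by simp

(* The numerator of p_b is one term of the Vandermonde sum for (n choose n/2). *)
lemma pb_le_one:
  assumes "even n" "even b" "b \<le> n"
  shows "pb n b \<le> 1"
proof -
  have sub: "n div 2 - (n - b) div 2 = b div 2" "(n - b) div 2 \<le> n div 2" "n - b + b = n"
    using assms by auto
  have "((n - b) choose ((n - b) div 2)) * (b choose (b div 2))
        \<le> (\<Sum>i\<le>n div 2. ((n - b) choose i) * (b choose (n div 2 - i)))"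
    using member_le_sum[of "(n - b) div 2" "{..n div 2}" "\<lambda>i. ((n - b) choose i) * (b choose (n div 2 - i))"]
      sub by simp
  also have "\<dots> = n choose (n div 2)" using vandermonde[of "n - b" b "n div 2"] sub by simp
  finally have "real ((n - b) choose ((n - b) div 2)) * real (b choose (b div 2))
                \<le> real (n choose (n div 2))" by (simp only: of_nat_mult[symmetric] of_nat_le_iff)
  then show ?thesis unfolding pb_def by (simp add: divide_le_eq_1)
qed

lemma pb_lower:
  assumes "even n" "even b" "2 \<le> b" "b \<le> n"
  shows "pb n b * sqrt (2 * real b) \<ge> 1"
proof -
  obtain h j where h: "n = 2*h" and j: "b = 2*j" using assms by (auto elim!: evenE)
  have jh: "j \<le> h" "j \<ge> 1" using h j assms by auto
  have "(n - b) div 2 = h - j" using h j by simp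
  then have p: "pb n b = cb (h-j) * cb j / cb h" using pb_cb[OF assms(1,2,4)] h j by simp
  have "cb h \<le> 4^j * cb (h-j)" using cb_le_pow[of "h-j" j] jh by simp
  then have "cb (h-j) * cb j / (4^j * cb (h-j)) \<le> pb n b"
    unfolding p using cb_pos[of j] cb_pos[of "h-j"] cb_pos[of h]
    by (intro divide_left_mono mult_pos_pos) auto
  then have pge: "cb j / 4^j \<le> pb n b" using cb_pos[of "h-j"] by simp
  have "1 \<le> (cb j)^2 * (4 * real j) / (4^j)^2" using cb_lower[OF jh(2)] by (simp add: field_simps)
  also have "\<dots> = (cb j / 4^j * sqrt (2 * real b))^2"
    using j by (simp add: power_mult_distrib power_divide)
  finally have "1\<^sup>2 \<le> (cb j / 4^j * sqrt (2 * real b))^2" by simp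
  then have "1 \<le> cb j / 4^j * sqrt (2 * real b)"
    by (rule power2_le_imp_le) (simp add: cb_pos less_imp_le)
  also have "\<dots> \<le> pb n b * sqrt (2 * real b)" using pge by (intro mult_right_mono) auto
  finally show ?thesis .
qed

lemma pb_ratio:
  assumes "even n" "1 \<le> j" "2*j \<le> n"
  shows "pb n (2*j) * real j * (2*(real (n div 2) - real j)+1)
       = pb n (2*j-2) * (2*real j - 1) * (real (n div 2) - real j + 1)"
proof -
  define i where "i = j - 1"
  define g where "g = n div 2 - j"
  have ij: "j = i + 1" and gh: "n div 2 = g + i + 1" using assms unfolding i_def g_def by auto
  have idx: "(n - 2*j) div 2 = g" "2*j div 2 = i+1" "(n - (2*j-2)) div 2 = g+1" "(2*j-2) div 2 = i"
    using assms gh ij by auto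
  have P: "pb n (2*j) = cb g * cb (i+1) / cb (n div 2)"
    using pb_cb[of n "2*j"] assms unfolding idx by simp
  have Q: "pb n (2*j-2) = cb (g+1) * cb i / cb (n div 2)"
    using pb_cb[of n "2*j-2"] assms unfolding idx by simp
  have hd: "real (n div 2) = real g + real i + 1" "real j = real i + 1" using gh ij by auto
  have "pb n (2*j) * real j * (2*(real (n div 2) - real j)+1)
      = (real (i+1) * cb (i+1)) * cb g * (2*real g+1) / cb (n div 2)"
    unfolding P hd by (simp add: field_simps)
  also have "\<dots> = (real (g+1) * cb (g+1)) * cb i * (2*real i+1) / cb (n div 2)"
    unfolding cb_rec by (simp add: field_simps)
  also have "\<dots> = pb n (2*j-2) * (2*real j - 1) * (real (n div 2) - real j + 1)"
    unfolding Q hd by (simp add: field_simps)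
  finally show ?thesis .
qed

lemma ratio_gap_below:
  fixes j h P Q :: real
  assumes j: "j \<ge> 1" and h: "h \<ge> 2*j+1" and Q: "Q \<ge> 0"
    and eq: "P * j * (2*(h-j)+1) = Q * (2*j-1) * (h-j+1)"
  shows "Q - P \<ge> Q * (2*h-4*j) / (4*j*h)" and "Q \<le> 2 * P"
proof -
  define A where "A = j*(2*h-2*j+1)"
  define B where "B = (2*j-1)*(h-j+1)"
  have A0: "A > 0" unfolding A_def using j h by (intro mult_pos_pos) auto
  have eq': "P * A = Q * B" using eq unfolding A_def B_def by (simp add: algebra_simps)
  have "(Q - P) * A = Q * (h - 2*j + 1)"
    using eq' unfolding A_def B_def by (simp add: algebra_simps)
  then have QP: "Q - P = Q * (h - 2*j + 1) / A" using A0 by (simp add: field_simps)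
  have "(h-2*j+1)*(4*j*h) - (2*h-4*j)*A = 2*j*(2*h + (h-2*j)*(2*j-1))"
    unfolding A_def by (simp add: algebra_simps)
  also have "\<dots> \<ge> 0" using j h by (intro mult_nonneg_nonneg add_nonneg_nonneg) auto
  finally have "(2*h-4*j) * A \<le> (h - 2*j + 1) * (4*j*h)" by simp
  then have "Q * (2*h-4*j) * A \<le> Q * (h - 2*j + 1) * (4*j*h)"
    using mult_left_mono[OF _ Q] by (simp add: mult.assoc)
  then show "Q - P \<ge> Q * (2*h-4*j) / (4*j*h)"
    unfolding QP using A0 j h by (simp add: divide_simps)
  have "2*B - A = 2*(h-(2*j+1))*(j-1) + 2*j^2 + 3*j - 4"
    unfolding A_def B_def by (simp add: algebra_simps power2_eq_square)
  moreover have "0 \<le> 2*(h-(2*j+1))*(j-1)" using j h by auto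
  moreover have "1 \<le> j^2" using j by (rule one_le_power)
  ultimately have "A \<le> 2 * B" using j by linarith
  then have "Q * A \<le> Q * (2 * B)" using Q by (rule mult_left_mono)
  also have "\<dots> = 2 * P * A" using eq' by simp
  finally show "Q \<le> 2 * P" using A0 by simp
qed

lemma ratio_gap_above:
  fixes j h P R :: real
  assumes j: "j \<ge> 1" and h: "h \<ge> 2*j+2" and P: "P \<ge> 0"
    and eq: "R * (j+1) * (2*(h-(j+1))+1) = P * (2*(j+1)-1) * (h-(j+1)+1)"
  shows "P - R \<ge> P * (2*h-4*j) / (16*j*h)"
proof -
  define A where "A = (j+1)*(2*h-2*j-1)"
  define B where "B = (2*j+1)*(h-j)"
  have A0: "A > 0" unfolding A_def using j h by (intro mult_pos_pos) auto
  have eq': "R * A = P * B" using eq unfolding A_def B_def by (simp add: algebra_simps)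
  have "(P - R) * A = P * (h - 2*j - 1)"
    using eq' unfolding A_def B_def by (simp add: algebra_simps)
  then have PR: "P - R = P * (h - 2*j - 1) / A" using A0 by (simp add: field_simps)
  have "A \<le> (2*j)*(2*h)" unfolding A_def using j h by (intro mult_mono) auto
  then have "(2*h-4*j) * A \<le> (4*(h-2*j-1)) * ((2*j)*(2*h))"
    using A0 j h by (intro mult_mono) auto
  then have "(2*h-4*j) * A \<le> (h - 2*j - 1) * (16*j*h)" by (simp add: algebra_simps)
  then have "P * ((2*h-4*j) * A) \<le> P * ((h - 2*j - 1) * (16*j*h))"
    using P by (rule mult_left_mono)
  then have "P * (2*h-4*j) * A \<le> P * (h - 2*j - 1) * (16*j*h)" by (simp add: mult.assoc)
  then show ?thesis unfolding PR using A0 j h by (simp add: divide_simps)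
qed

lemma pb_gap_below:
  assumes evn: "even n" and eva: "even a" and a2: "2 \<le> a" and an: "2*a < n"
  shows "pb n (a-2) - pb n a \<ge> pb n (a-2) * (real n - 2*real a) / (real a * real n)"
    and "pb n (a-2) \<le> 2 * pb n a"
proof -
  define j where "j = a div 2"
  have a: "a = 2*j" and j: "1 \<le> j" "2*j \<le> n" using eva a2 an unfolding j_def by auto
  have n: "real n = 2 * real (n div 2)" using evn by auto
  have "2 * j + 1 \<le> n div 2" using an a evn by auto
  then have "2 * real j + 1 \<le> real (n div 2)" by linarith
  note gap = ratio_gap_below[OF _ this pb_nonneg pb_ratio[OF evn j]]
  show "pb n (a-2) - pb n a \<ge> pb n (a-2) * (real n - 2*real a) / (real a * real n)"
    using gap(1) j unfolding a n by (simp add: algebra_simps)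
  show "pb n (a-2) \<le> 2 * pb n a" using gap(2) j unfolding a by simp
qed

lemma pb_gap_above:
  assumes evn: "even n" and eva: "even a" and a2: "2 \<le> a" and an: "a + 2 \<le> n div 2"
  shows "pb n a - pb n (a+2) \<ge> pb n a * (real n - 2*real a) / (4 * real a * real n)"
proof -
  define j where "j = a div 2"
  have a: "a = 2*j" and j: "1 \<le> j" "1 \<le> j+1" "2*(j+1) \<le> n" using eva a2 an unfolding j_def by auto
  have n: "real n = 2 * real (n div 2)" using evn by auto
  have "2 * real j + 2 \<le> real (n div 2)" using an a by linarith
  from ratio_gap_above[of "real j" "real (n div 2)" "pb n a" "pb n (a+2)"] pb_ratio[OF evn j(2,3)]
    this j pb_nonneg
  have "pb n a - pb n (a+2) \<ge> pb n a * (2*real (n div 2) - 4*real j) / (16*real j*real (n div 2))"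
    unfolding a by (simp add: algebra_simps)
  then show ?thesis unfolding a n by (simp add: algebra_simps)
qed

(* For a = 0 the lower threshold lies strictly below N: p_2 = h/(2h-1) < 1 with h = n/2 >= 2. *)
lemma pb_two_lt_one:
  assumes evn: "even n" and n: "4 \<le> n"
  shows "pb n 2 < 1"
proof -
  have "2 \<le> n div 2" using n by simp
  then have h: "2 \<le> real (n div 2)" by linarith
  have "pb n 2 * (2 * real (n div 2) - 1) = real (n div 2)"
    using pb_ratio[OF evn, of 1] pb_zero[OF evn] n by (simp add: algebra_simps numeral_2_eq_2)
  then show ?thesis using h pb_nonneg[of n 2] by (smt (verit) mult_le_cancel_right1)
qed


(* Exponential Markov inequality for Binomial(N, p): if l x >= l t on A, then
   Pr(A) <= E exp(l (X - t)) <= exp(N p (e^l - 1) - l t). *)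
lemma binomial_mgf_bound:
  fixes p l t :: real
  assumes p: "0 \<le> p" "p \<le> 1" and A: "\<And>x. x \<in> A \<Longrightarrow> l * t \<le> l * real x"
  shows "measure_pmf.prob (binomial_pmf N p) A \<le> exp (real N * p * (exp l - 1) - l * t)"
proof -
  let ?B = "binomial_pmf N p"
  have "measure_pmf.prob ?B A = measure_pmf.prob ?B (A \<inter> set_pmf ?B)"
    by (simp add: measure_Int_set_pmf)
  also have "\<dots> \<le> measure_pmf.prob ?B (A \<inter> {..N})"
    using p by (intro measure_pmf.finite_measure_mono) (auto simp: set_pmf_binomial_eq split: if_splits)
  also have "\<dots> = (\<Sum>x\<in>A \<inter> {..N}. pmf ?B x)"
    by (rule measure_measure_pmf_finite) auto
  also have "\<dots> \<le> (\<Sum>x\<in>A \<inter> {..N}. pmf ?B x * exp (l * (real x - t)))"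
  proof (rule sum_mono)
    fix x assume "x \<in> A \<inter> {..N}"
    then have "1 \<le> exp (l * (real x - t))" using A by (simp add: algebra_simps)
    then show "pmf ?B x \<le> pmf ?B x * exp (l * (real x - t))"
      using pmf_nonneg[of ?B x] by (simp add: mult_le_cancel_left1)
  qed
  also have "\<dots> \<le> (\<Sum>x\<in>{..N}. pmf ?B x * exp (l * (real x - t)))"
    by (rule sum_mono2) auto
  also have "\<dots> = exp (- l * t) * (p * exp l + (1 - p)) ^ N"
    unfolding binomial_ring sum_distrib_left
  proof (rule sum.cong[OF refl])
    fix x assume "x \<in> {..N}"
    have "exp (l * (real x - t)) = exp (- l * t) * exp l ^ x"
      by (simp add: exp_of_nat_mult[symmetric] exp_add[symmetric] algebra_simps)
    then show "pmf ?B x * exp (l * (real x - t)) =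
          exp (- l * t) * (real (N choose x) * (p * exp l) ^ x * (1 - p) ^ (N - x))"
      using p by (simp add: pmf_binomial power_mult_distrib)
  qed
  also have "\<dots> \<le> exp (- l * t) * exp (p * (exp l - 1)) ^ N"
  proof -
    have "p * exp l + (1 - p) \<le> exp (p * (exp l - 1))"
      using exp_ge_add_one_self[of "p * (exp l - 1)"] by (simp add: algebra_simps)
    moreover have "0 \<le> p * exp l + (1 - p)" using p by simp
    ultimately show ?thesis by (simp add: power_mono)
  qed
  also have "\<dots> = exp (real N * p * (exp l - 1) - l * t)"
    by (simp add: exp_of_nat_mult[symmetric] exp_add[symmetric] algebra_simps)
  finally show ?thesis .
qed

(* Second-order upper bound for exp(-u), u >= 0, from the quadratic Taylor lower bound of exp u. *)
lemma exp_neg_le_quadratic: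
  fixes u :: real assumes "0 \<le> u"
  shows "exp (- u) \<le> 1 - u + u^2"
proof -
  have e: "1 + u + u^2/2 \<le> exp u" by (rule exp_lower_Taylor_quadratic[OF assms])
  have pos: "0 < 1 + u + u^2/2" using assms by (simp add: add_pos_nonneg)
  have "(1 + u + u^2/2) * (1 - u + u^2) = 1 + u^2/2 + u^3/2 + u^4/2"
    by (simp add: field_simps power2_eq_square power3_eq_cube power4_eq_xxxx)
  also have "\<dots> \<ge> 1" using assms by simp
  finally have h: "1 \<le> (1 + u + u^2/2) * (1 - u + u^2)" .
  have "exp (- u) = 1 / exp u" by (simp add: exp_minus field_simps)
  also have "\<dots> \<le> 1 / (1 + u + u^2/2)" using e pos by (intro divide_left_mono) auto
  also have "\<dots> \<le> 1 - u + u^2" using h pos by (simp add: divide_le_eq mult.commute)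
  finally show ?thesis .
qed

lemma chernoff_upper:
  fixes p d :: real
  assumes p: "0 < p" "p \<le> 1" and d: "0 \<le> d" "d \<le> 2 * p"
  shows "measure_pmf.prob (binomial_pmf N p) {x. real N * (p + d) \<le> real x}
         \<le> exp (- real N * d^2 / (4 * p))"
proof -
  define l where "l = d / (2 * p)"
  have l: "0 \<le> l" "l \<le> 1" using p d by (auto simp: l_def)
  have "measure_pmf.prob (binomial_pmf N p) {x. real N * (p + d) \<le> real x}
     \<le> exp (real N * p * (exp l - 1) - l * (real N * (p + d)))"
    using p l by (intro binomial_mgf_bound) (auto intro: mult_left_mono)
  also have "\<dots> \<le> exp (real N * p * (l + l^2) - l * (real N * (p + d)))"
    using exp_bound[OF l] p by (simp add: mult_left_mono)
  also have "real N * p * (l + l^2) - l * (real N * (p + d)) = - real N * d^2 / (4 * p)"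
    using p unfolding l_def by (simp add: field_simps power2_eq_square)
  finally show ?thesis .
qed

lemma chernoff_lower:
  fixes p d :: real
  assumes p: "0 < p" "p \<le> 1" and d: "0 \<le> d"
  shows "measure_pmf.prob (binomial_pmf N p) {x. real x \<le> real N * (p - d)}
         \<le> exp (- real N * d^2 / (4 * p))"
proof -
  define u where "u = d / (2 * p)"
  have u: "0 \<le> u" using p d by (auto simp: u_def)
  have "measure_pmf.prob (binomial_pmf N p) {x. real x \<le> real N * (p - d)}
     \<le> exp (real N * p * (exp (- u) - 1) - (- u) * (real N * (p - d)))"
    using p u by (intro binomial_mgf_bound) (auto intro: mult_left_mono)
  also have "\<dots> \<le> exp (real N * p * (- u + u^2) - (- u) * (real N * (p - d)))"
    using exp_neg_le_quadratic[OF u] p by (simp add: mult_left_mono)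
  also have "real N * p * (- u + u^2) - (- u) * (real N * (p - d)) = - real N * d^2 / (4 * p)"
    using p unfolding u_def by (simp add: field_simps power2_eq_square)
  finally show ?thesis .
qed

(* The arithmetic heart of the choice K = 512 k: a deviation d of at least X (n-2a)/(8an),
   with X >= 1/sqrt(2a) and N >= 512 k a^(5/2) n^2 / (n-2a)^(3/2), makes the Chernoff
   exponent N d^2/(4P) at least k sqrt(n-2a) (here D stands for n - 2a). *)
lemma chernoff_exponent_bound:
  fixes k a n D X P d N :: real
  assumes k: "k > 0" and a: "a > 0" and n: "n > 0" and D: "D > 0"
    and P: "0 < P" "P \<le> X" and X: "1 \<le> X * sqrt (2*a)"
    and d: "X * D / (8*a*n) \<le> d"
    and N: "512*k * a powr (5/2) * n^2 / D powr (3/2) \<le> N"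
  shows "k * sqrt D \<le> N * d^2 / (4*P)"
proof -
  define s t where "s = sqrt a" and "t = sqrt D"
  have st: "s > 0" "t > 0" "a = s^2" "D = t^2" using a D unfolding s_def t_def by auto
  have powr_sqrt: "x powr (r + 1/2) = x powr r * sqrt x" if "x > 0" for x r :: real
    using that by (simp add: powr_add powr_half_sqrt)
  have "a powr (5/2) = s^5" "D powr (3/2) = t^3"
    using powr_sqrt[OF a, of 2] powr_sqrt[OF D, of 1] st
    by (simp_all add: power_mult_distrib[symmetric] numeral_eq_Suc)
  then have N': "512*k * s^5 * n^2 / t^3 \<le> N" using N by simp
  have "0 \<le> 512*k * s^5 * n^2 / t^3" using k st n by simp
  then have N0: "0 \<le> N" using N' by linarith
  have X0: "X > 0" using P by simp
  have sqrt2: "1 \<le> sqrt 2" "sqrt 2 > 0" by auto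
  have "k * t \<le> sqrt 2 * k * t" using sqrt2 k st by simp
  also have "\<dots> = (512*k * s^5 * n^2 / t^3) * (t^4 / (256 * sqrt 2 * s^5 * n^2))"
    using st n sqrt2 by (simp add: field_simps power_numeral_reduce)
  also have "\<dots> \<le> N * (t^4 / (256 * sqrt 2 * s^5 * n^2))"
    using N' st n by (intro mult_right_mono) auto
  also have "\<dots> = (N * t^4 / (256 * s^4 * n^2)) * (1 / (sqrt 2 * s))"
    using st n by (simp add: field_simps power_numeral_reduce)
  also have "\<dots> \<le> (N * t^4 / (256 * s^4 * n^2)) * X"
  proof (rule mult_left_mono)
    show "1 / (sqrt 2 * s) \<le> X" using X st by (simp add: real_sqrt_mult divide_le_eq mult.commute)
    show "0 \<le> N * t^4 / (256 * s^4 * n^2)" using N0 by simp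
  qed
  also have "\<dots> = N * (X * D / (8*a*n))^2 / (4 * X)"
    using X0 st n by (simp add: field_simps power2_eq_square power4_eq_xxxx)
  also have "\<dots> \<le> N * d^2 / (4 * X)"
    using d X0 st n N0 by (intro divide_right_mono mult_left_mono power_mono) auto
  also have "\<dots> \<le> N * d^2 / (4 * P)"
    using P N0 by (intro divide_left_mono) auto
  finally show ?thesis unfolding t_def .
qed

lemma binomial_upper_threshold_tail:
  fixes k :: real
  assumes k: "k > 0" and evn: "even n" and eva: "even a" and a2: "2 \<le> a" and an: "2*a < n"
    and N: "512*k * real a powr (5/2) * (real n)^2 / (real n - 2*real a) powr (3/2) \<le> real N"
  shows "measure_pmf.prob (binomial_pmf N (pb n a))
           {x. real N * (pb n a + pb n (a-2)) / 2 \<le> real x}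
         \<le> exp (- k * sqrt (real n - 2*real a))"
proof -
  define P Q D where "P = pb n a" and "Q = pb n (a-2)" and "D = real n - 2 * real a"
  define G where "G = Q * D / (real a * real n)"
  define d where "d = (Q - P) / 2"
  have D: "D > 0" using an by (simp add: D_def)
  have gap: "G \<le> Q - P" "Q \<le> 2 * P"
    using pb_gap_below[OF evn eva a2 an] by (simp_all add: P_def Q_def D_def G_def)
  have gap0: "0 \<le> G" unfolding G_def Q_def using D pb_nonneg by simp
  have Plow: "1 \<le> P * sqrt (2 * real a)" using pb_lower[OF evn eva a2] an by (simp add: P_def)
  have P: "0 < P" "P \<le> 1"
    using Plow pb_nonneg[of n a] pb_le_one[OF evn eva] an by (auto simp: P_def order_le_less)
  have PQ: "P \<le> Q" using gap gap0 by linarith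
  have Qlow: "1 \<le> Q * sqrt (2 * real a)"
    using Plow mult_right_mono[OF PQ, of "sqrt (2 * real a)"] by simp
  have G_scaled: "Q * D / (8 * real a * real n) = G / 8" unfolding G_def by simp
  have dlow: "Q * D / (8 * real a * real n) \<le> d" unfolding G_scaled d_def using gap gap0 by (simp add: field_simps)
  have d: "0 \<le> d" "d \<le> 2 * P" using gap gap0 P unfolding d_def by (simp_all add: field_simps)
  have expo: "k * sqrt D \<le> real N * d^2 / (4 * P)"
    by (rule chernoff_exponent_bound[OF k _ _ D P(1) PQ Qlow dlow])
       (use a2 an N in \<open>simp_all add: D_def\<close>)
  have "{x. real N * (P + Q) / 2 \<le> real x} = {x. real N * (P + d) \<le> real x}"
    unfolding d_def by (simp add: field_simps)
  then have "measure_pmf.prob (binomial_pmf N P) {x. real N * (P + Q) / 2 \<le> real x}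
      \<le> exp (- real N * d^2 / (4 * P))"
    using chernoff_upper[OF P d] by simp
  also have "\<dots> \<le> exp (- k * sqrt D)" using expo by simp
  finally show ?thesis unfolding P_def Q_def D_def .
qed

lemma binomial_lower_threshold_tail:
  fixes k :: real
  assumes k: "k > 0" and evn: "even n" and eva: "even a" and an: "a + 2 \<le> n div 2"
    and N0: "0 < N"
    and N: "512*k * real a powr (5/2) * (real n)^2 / (real n - 2*real a) powr (3/2) \<le> real N"
  shows "measure_pmf.prob (binomial_pmf N (pb n a))
           {x. real x \<le> real N * (pb n a + pb n (a+2)) / 2}
         \<le> exp (- k * sqrt (real n - 2*real a))"
proof (cases "a = 0")
  case True
  have "4 \<le> n" using True an by simp
  then have "pb n a = 1" "pb n (a+2) < 1" using pb_zero[OF evn] pb_two_lt_one[OF evn]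
    unfolding True add_0_left by simp_all
  then have "real N * (pb n a + pb n (a+2)) / 2 < real N" using N0 by simp
  then have "measure_pmf.prob (binomial_pmf N (pb n a))
               {x. real x \<le> real N * (pb n a + pb n (a+2)) / 2} = 0"
    using \<open>pb n a = 1\<close> by (simp add: measure_pmf_zero_iff)
  then show ?thesis by simp
next
  case False
  define P R D where "P = pb n a" and "R = pb n (a+2)" and "D = real n - 2 * real a"
  define G where "G = P * D / (4 * real a * real n)"
  define d where "d = (P - R) / 2"
  have a2: "2 \<le> a" using False eva by presburger
  have D: "D > 0" using an by (simp add: D_def)
  have gap: "G \<le> P - R" using pb_gap_above[OF evn eva a2 an] by (simp add: P_def R_def D_def G_def)
  have gap0: "0 \<le> G" unfolding G_def P_def using D pb_nonneg by simp
  have Plow: "1 \<le> P * sqrt (2 * real a)" using pb_lower[OF evn eva a2] an by (simp add: P_def)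
  have "a \<le> n" using an div_le_dividend[of n 2] by linarith
  then have P: "0 < P" "P \<le> 1"
    using Plow pb_nonneg[of n a] pb_le_one[OF evn eva] by (auto simp: P_def order_le_less)
  have G_scaled: "P * D / (8 * real a * real n) = G / 2" unfolding G_def by simp
  have dlow: "P * D / (8 * real a * real n) \<le> d" unfolding G_scaled d_def using gap by simp
  have d: "0 \<le> d" using gap gap0 unfolding d_def by simp
  have expo: "k * sqrt D \<le> real N * d^2 / (4 * P)"
    by (rule chernoff_exponent_bound[OF k _ _ D P(1) order_refl Plow dlow])
       (use a2 an N in \<open>simp_all add: D_def\<close>)
  have "{x. real x \<le> real N * (P + R) / 2} = {x. real x \<le> real N * (P - d)}"
    unfolding d_def by (simp add: field_simps)
  then have "measure_pmf.prob (binomial_pmf N P) {x. real x \<le> real N * (P + R) / 2}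
      \<le> exp (- real N * d^2 / (4 * P))"
    using chernoff_lower[OF P d] by simp
  also have "\<dots> \<le> exp (- k * sqrt D)" using expo by simp
  finally show ?thesis unfolding P_def R_def D_def .
qed
theorem lemma16:
  fixes k :: real
  assumes "k > 0"
  shows "\<exists>K::real. \<forall>n a N (y::bool list).
     even n \<longrightarrow> even a \<longrightarrow> 2 * a < n \<longrightarrow> length y = n \<longrightarrow>
     min (ones y) (n - ones y) = a \<longrightarrow> 0 < N \<longrightarrow>
     real N \<ge> K * real a powr (5/2) * (real n)^2 / (real n - 2 * real a) powr (3/2) \<longrightarrow>
     (a \<ge> 2 \<longrightarrow>
        measure_pmf.prob (samples N y)
          {f. real (countY n N f) \<ge> real N * (pb n a + pb n (a - 2)) / 2}
        \<le> exp (- k * sqrt (real n - 2 * real a))) \<and>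
     (a + 2 \<le> n div 2 \<longrightarrow>
        measure_pmf.prob (samples N y)
          {f. real (countY n N f) \<le> real N * (pb n a + pb n (a + 2)) / 2}
        \<le> exp (- k * sqrt (real n - 2 * real a)))"
proof (intro exI[of _ "512 * k"] allI impI conjI)
  fix n a N and y :: "bool list"
  assume evn: "even n" and eva: "even a" and an: "2 * a < n" and len: "length y = n"
    and mina: "min (ones y) (n - ones y) = a" and N0: "0 < N"
    and N: "real N \<ge> 512 * k * real a powr (5/2) * (real n)^2 / (real n - 2 * real a) powr (3/2)"
  (* Y is Binomial(N, p_a), so both events are binomial tail events. *)
  have transfer: "measure_pmf.prob (samples N y) {f. \<Phi> (real (countY n N f))}
      = measure_pmf.prob (binomial_pmf N (pb n a)) {x. \<Phi> (real x)}" for \<Phi>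
    unfolding countY_distribution[OF len evn eva mina, of N, symmetric] measure_map_pmf
    by (simp add: vimage_def)
  show "measure_pmf.prob (samples N y)
          {f. real (countY n N f) \<ge> real N * (pb n a + pb n (a - 2)) / 2}
        \<le> exp (- k * sqrt (real n - 2 * real a))" if "a \<ge> 2"
    using binomial_upper_threshold_tail[OF assms evn eva that an N]
    unfolding transfer[of "\<lambda>z. real N * (pb n a + pb n (a - 2)) / 2 \<le> z"] .
  show "measure_pmf.prob (samples N y)
          {f. real (countY n N f) \<le> real N * (pb n a + pb n (a + 2)) / 2}
        \<le> exp (- k * sqrt (real n - 2 * real a))" if "a + 2 \<le> n div 2"
    using binomial_lower_threshold_tail[OF assms evn eva that N0 N]
    unfolding transfer[of "\<lambda>z. z \<le> real N * (pb n a + pb n (a + 2)) / 2"] .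
qed

end
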